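(* Let $q$ be a meromorphic quadratic differential on $\mathbb{P}^1$ with exactly four poles, all double poles, each of residue $1$, and holomorphic elsewhere. Then the zero partition of $q$ is either $4=2+2$ or $4=1+1+1+1$, i.e. $q$ has two double zeroes or four simple zeroes.
   Context: A double pole $p$ of $q$ has residue $a>0$ if, in a local coordinate $z$ with $z(p)=0$, $q=\bigl(-\frac{a^2}{4\pi^2 z^2}+O(z^{-1})\bigr)dz^2$. Such a $q$ has four zeroes counted with multiplicity. *)

theory Defs
  imports "HOL-Complex_Analysis.Complex_Analysis" "HOL-Library.Landau_Symbols"
begin

text \<open>Points of the Riemann sphere P^1: Some z is the finite point z, None is infinity.
A meromorphic quadratic differential q on P^1 is given by its coefficient f in the
standard coordinate z, i.e. q = f(z) dz^2.  In the chart w = 1/z near infinity,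
dz = -dw/w^2, so q = f(1/w) w^(-4) dw^2.\<close>

definition qd_local :: "(complex \<Rightarrow> complex) \<Rightarrow> complex option \<Rightarrow> complex \<Rightarrow> complex" where
  "qd_local f x = (case x of Some p \<Rightarrow> (\<lambda>t. f (p + t)) | None \<Rightarrow> (\<lambda>t. f (1 / t) / t ^ 4))"

definition meromorphic_qd :: "(complex \<Rightarrow> complex) \<Rightarrow> bool" where
  "meromorphic_qd f \<longleftrightarrow> (\<forall>x. qd_local f x meromorphic_on {0})"

definition qd_order :: "(complex \<Rightarrow> complex) \<Rightarrow> complex option \<Rightarrow> int" where
  "qd_order f x = zorder (qd_local f x) 0"

definition qd_holomorphic_at :: "(complex \<Rightarrow> complex) \<Rightarrow> complex option \<Rightarrow> bool" where
  "qd_holomorphic_at f x \<longleftrightarrow>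
     (\<exists>g. g analytic_on {0} \<and> (\<forall>\<^sub>F t in at 0. qd_local f x t = g t))"

definition qd_double_pole_residue :: "(complex \<Rightarrow> complex) \<Rightarrow> complex option \<Rightarrow> real \<Rightarrow> bool" where
  "qd_double_pole_residue f x a \<longleftrightarrow>
     is_pole (qd_local f x) 0 \<and> qd_order f x = -2 \<and>
     (\<lambda>t. qd_local f x t - (- (complex_of_real (a ^ 2)) / (4 * complex_of_real (pi ^ 2) * t ^ 2)))
        \<in> O[at 0](\<lambda>t. 1 / t)"

definition qd_zeros :: "(complex \<Rightarrow> complex) \<Rightarrow> complex option set" where
  "qd_zeros f = {x. qd_order f x > 0}"

end

theory Submission
  imports Defs "HOL-Computational_Algebra.Fundamental_Theorem_Algebra"
begin

(* Let D be the monic polynomial whose roots are the finite poles.  Then f D^2 has only removable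
   singularities and grows like |z|^4, so it is a polynomial c of degree at most 4 and
   q = c(z)/D(z)^2 dz^2.  The residue condition says c(p) = k D'(p)^2 at every finite pole p, where
   k = -1/(4 pi^2), and c has leading coefficient k if infinity is a pole.  As the Hessian
   H = 3 D'^2 - 4 D D'' of the binary quartic D equals 3 D'^2 at the roots of D, interpolation at
   the three or four finite poles forces c = a D + (k/3) H: the numerator lies in the syzygetic
   pencil of D.  The zeros of q are those of the binary quartic c.  A double zero r of a member of
   the pencil that is not a root of D makes it a perfect square, by an explicit identity among its
   Taylor coefficients at r (a triple zero would make D a square, impossible with three distinct
   roots).  So the zero divisor of c is either reduced or twice a divisor of degree two. *)


section \<open>Binary quartics and their Hessian\<close>

definition quartic_eval :: "(nat \<Rightarrow> 'a::comm_ring_1) \<Rightarrow> 'a \<Rightarrow> 'a" where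
  "quartic_eval c z = c 0 + c 1 * z + c 2 * z^2 + c 3 * z^3 + c 4 * z^4"

definition quartic_shift :: "(nat \<Rightarrow> 'a::comm_ring_1) \<Rightarrow> 'a \<Rightarrow> nat \<Rightarrow> 'a" where
  "quartic_shift c r i =
     (if i = 0 then quartic_eval c r
      else if i = 1 then c 1 + 2 * c 2 * r + 3 * c 3 * r^2 + 4 * c 4 * r^3
      else if i = 2 then c 2 + 3 * c 3 * r + 6 * c 4 * r^2
      else if i = 3 then c 3 + 4 * c 4 * r
      else if i = 4 then c 4 else 0)"

(* Coefficients of 3 e'^2 - 4 e e'', the dehomogenised Hessian of the binary quartic form with
   coefficients e. *)
definition quartic_hessian :: "(nat \<Rightarrow> 'a::comm_ring_1) \<Rightarrow> nat \<Rightarrow> 'a" where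
  "quartic_hessian e i =
     (if i = 0 then 3 * e 1^2 - 8 * e 0 * e 2
      else if i = 1 then 4 * e 1 * e 2 - 24 * e 0 * e 3
      else if i = 2 then 4 * e 2^2 - 6 * e 1 * e 3 - 48 * e 0 * e 4
      else if i = 3 then 4 * e 2 * e 3 - 24 * e 1 * e 4
      else if i = 4 then 3 * e 3^2 - 8 * e 2 * e 4 else 0)"

lemma quartic_eval_shift: "quartic_eval c (r + t) = quartic_eval (quartic_shift c r) t"
  unfolding quartic_eval_def quartic_shift_def
  by (simp add: algebra_simps power2_eq_square power3_eq_cube power4_eq_xxxx)

lemma quartic_hessian_shift: "quartic_hessian (quartic_shift e r) i = quartic_shift (quartic_hessian e) r i"
  unfolding quartic_hessian_def quartic_shift_def quartic_eval_def
  by (simp add: algebra_simps power2_eq_square power3_eq_cube power4_eq_xxxx)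

lemma quartic_shift_linear:
  "quartic_shift (\<lambda>i. a * e i + b * g i) r i = a * quartic_shift e r i + b * quartic_shift g r i"
  unfolding quartic_shift_def quartic_eval_def by (simp add: algebra_simps)

lemma poly_eq_quartic_eval:
  assumes "degree p \<le> 4"
  shows "poly p z = quartic_eval (coeff p) z"
proof -
  have "poly p z = (\<Sum>i\<le>degree p. coeff p i * z ^ i)" by (rule poly_altdef)
  also have "\<dots> = (\<Sum>i\<le>4. coeff p i * z ^ i)"
    by (rule sum.mono_neutral_left) (use assms in \<open>auto simp: coeff_eq_0\<close>)
  also have "\<dots> = quartic_eval (coeff p) z" by (simp add: quartic_eval_def eval_nat_numeral algebra_simps)
  finally show ?thesis .
qed

lemma poly_pderiv_eq_quartic_shift:
  fixes p :: "'a::{idom, ring_char_0} poly"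
  assumes "degree p \<le> 4"
  shows "poly (pderiv p) z = quartic_shift (coeff p) z 1"
proof -
  have "degree (pderiv p) \<le> 3" using assms unfolding degree_pderiv by linarith
  hence "poly (pderiv p) z = quartic_eval (coeff (pderiv p)) z" by (intro poly_eq_quartic_eval) simp
  also have "\<dots> = quartic_shift (coeff p) z 1"
    using assms
    by (simp add: quartic_eval_def quartic_shift_def coeff_pderiv coeff_eq_0 eval_nat_numeral
        algebra_simps)
  finally show ?thesis .
qed

lemma quartic_eval_hessian:
  "quartic_eval (quartic_hessian e) z = 3 * quartic_shift e z 1 ^ 2 - 8 * quartic_eval e z * quartic_shift e z 2"
proof -
  have "quartic_eval (quartic_hessian e) z = quartic_hessian (quartic_shift e z) 0"
    using quartic_hessian_shift[of e z 0] by (simp add: quartic_shift_def)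
  thus ?thesis by (simp add: quartic_hessian_def quartic_shift_def)
qed

lemma hessian_pencil_double_root_discriminant:
  fixes e q :: "nat \<Rightarrow> 'a::field_char_0"
  assumes "e 0 \<noteq> 0" "\<And>i. q i = a * e i + b * quartic_hessian e i" "q 0 = 0" "q 1 = 0"
  shows "q 3 ^ 2 = 4 * q 4 * q 2"
proof -
  have "a * e 0 + b * (3 * e 1^2 - 8 * e 0 * e 2) = 0"
       "a * e 1 + b * (4 * e 1 * e 2 - 24 * e 0 * e 3) = 0"
    using assms(2)[of 0] assms(2)[of 1] assms(3,4) by (simp_all add: quartic_hessian_def)
  with assms(1) have "(a * e 3 + b * (4 * e 2 * e 3 - 24 * e 1 * e 4))^2 =
      4 * (a * e 4 + b * (3 * e 3^2 - 8 * e 2 * e 4)) *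
        (a * e 2 + b * (4 * e 2^2 - 6 * e 1 * e 3 - 48 * e 0 * e 4))"
    by algebra
  thus ?thesis using assms(2)[of 2] assms(2)[of 3] assms(2)[of 4] by (simp add: quartic_hessian_def)
qed

lemma hessian_pencil_triple_root_square:
  fixes e q :: "nat \<Rightarrow> 'a::field_char_0"
  assumes "e 0 \<noteq> 0" "b \<noteq> 0" "\<And>i. q i = a * e i + b * quartic_hessian e i"
    "q 0 = 0" "q 1 = 0" "q 2 = 0"
  shows "64 * e 0^3 * quartic_eval e t = (8 * e 0^2 + 4 * e 0 * e 1 * t + (4 * e 0 * e 2 - e 1^2) * t^2)^2"
proof -
  have "a * e 0 + b * (3 * e 1^2 - 8 * e 0 * e 2) = 0"
       "a * e 1 + b * (4 * e 1 * e 2 - 24 * e 0 * e 3) = 0"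
       "a * e 2 + b * (4 * e 2^2 - 6 * e 1 * e 3 - 48 * e 0 * e 4) = 0"
    using assms(3)[of 0] assms(3)[of 1] assms(3)[of 2] assms(4-6)
    by (simp_all add: quartic_hessian_def)
  with assms(1,2) have "8 * e 0^2 * e 3 = e 1 * (4 * e 0 * e 2 - e 1^2) \<and>
      64 * e 0^3 * e 4 = (4 * e 0 * e 2 - e 1^2)^2"
    by algebra
  thus ?thesis unfolding quartic_eval_def by algebra
qed

lemma hessian_pencil_double_root_discriminant_at_infinity:
  fixes e q :: "nat \<Rightarrow> 'a::field_char_0"
  assumes "e 4 \<noteq> 0" "\<And>i. q i = a * e i + b * quartic_hessian e i" "q 4 = 0" "q 3 = 0"
  shows "q 1 ^ 2 = 4 * q 0 * q 2"
proof -
  have "a * e 4 + b * (3 * e 3^2 - 8 * e 2 * e 4) = 0"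
       "a * e 3 + b * (4 * e 2 * e 3 - 24 * e 1 * e 4) = 0"
    using assms(2)[of 4] assms(2)[of 3] assms(3,4) by (simp_all add: quartic_hessian_def)
  with assms(1) have "(a * e 1 + b * (4 * e 1 * e 2 - 24 * e 0 * e 3))^2 =
      4 * (a * e 0 + b * (3 * e 1^2 - 8 * e 0 * e 2)) *
        (a * e 2 + b * (4 * e 2^2 - 6 * e 1 * e 3 - 48 * e 0 * e 4))"
    by algebra
  thus ?thesis using assms(2)[of 0] assms(2)[of 1] assms(2)[of 2] by (simp add: quartic_hessian_def)
qed

lemma hessian_pencil_triple_root_square_at_infinity:
  fixes e q :: "nat \<Rightarrow> 'a::field_char_0"
  assumes "e 4 \<noteq> 0" "b \<noteq> 0" "\<And>i. q i = a * e i + b * quartic_hessian e i"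
    "q 4 = 0" "q 3 = 0" "q 2 = 0"
  shows "64 * e 4^3 * quartic_eval e t = (8 * e 4^2 * t^2 + 4 * e 4 * e 3 * t + (4 * e 4 * e 2 - e 3^2))^2"
proof -
  have "a * e 4 + b * (3 * e 3^2 - 8 * e 2 * e 4) = 0"
       "a * e 3 + b * (4 * e 2 * e 3 - 24 * e 1 * e 4) = 0"
       "a * e 2 + b * (4 * e 2^2 - 6 * e 1 * e 3 - 48 * e 0 * e 4) = 0"
    using assms(3)[of 4] assms(3)[of 3] assms(3)[of 2] assms(4-6)
    by (simp_all add: quartic_hessian_def)
  with assms(1,2) have "8 * e 4^2 * e 1 = e 3 * (4 * e 4 * e 2 - e 3^2) \<and>
      64 * e 4^3 * e 0 = (4 * e 4 * e 2 - e 3^2)^2"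
    by algebra
  thus ?thesis unfolding quartic_eval_def by algebra
qed

lemma card_zeros_le_degree_of_square:
  fixes g :: "'a::idom \<Rightarrow> 'a"
  assumes "\<And>t. c * g t = poly S t ^ 2" "c \<noteq> 0" "S \<noteq> 0"
  shows "card {t. g t = 0} \<le> degree S"
proof -
  have "{t. g t = 0} \<subseteq> {t. poly S t = 0}"
  proof
    fix t assume "t \<in> {t. g t = 0}"
    hence "poly S t ^ 2 = 0" using assms(1)[of t] by simp
    thus "t \<in> {t. poly S t = 0}" by simp
  qed
  hence "card {t. g t = 0} \<le> card {t. poly S t = 0}"
    by (rule card_mono[OF poly_roots_finite[OF assms(3)]])
  also have "\<dots> \<le> degree S" by (rule card_poly_roots_bound[OF assms(3)])
  finally show ?thesis .
qed

lemma hessian_pencil_double_root: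
  fixes e q :: "nat \<Rightarrow> 'a::field_char_0"
  assumes pencil: "\<And>i. q i = a * e i + b * quartic_hessian e i" and "b \<noteq> 0"
    and roots: "3 \<le> card {z. quartic_eval e z = 0}" and "quartic_eval e r \<noteq> 0"
    and "quartic_eval q r = 0" "quartic_shift q r 1 = 0"
  obtains \<sigma> where "quartic_shift q r 2 \<noteq> 0"
    "\<And>u. quartic_eval q (r + u) = quartic_shift q r 2 * u^2 * (1 + \<sigma> * u)^2"
proof -
  define e' where "e' = quartic_shift e r"
  define T where "T = quartic_shift q r"
  have "q = (\<lambda>i. a * e i + b * quartic_hessian e i)" using pencil by blast
  hence pencil': "\<And>i. T i = a * e' i + b * quartic_hessian e' i"
    by (simp add: T_def e'_def quartic_shift_linear quartic_hessian_shift)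
  have e'0: "e' 0 \<noteq> 0" and T0: "T 0 = 0" and T1: "T 1 = 0"
    using assms(4-6) by (simp_all add: e'_def T_def quartic_shift_def)
  have discr: "T 3 ^ 2 = 4 * T 4 * T 2"
    by (rule hessian_pencil_double_root_discriminant[OF e'0 pencil' T0 T1])
  have T2: "T 2 \<noteq> 0"
  proof
    assume T2: "T 2 = 0"
    define S where "S = [:8 * e' 0^2, 4 * e' 0 * e' 1, 4 * e' 0 * e' 2 - e' 1^2:] \<circ>\<^sub>p [:-r, 1:]"
    have "64 * e' 0^3 * quartic_eval e z = poly S z ^ 2" for z
      using hessian_pencil_triple_root_square[OF e'0 \<open>b \<noteq> 0\<close> pencil' T0 T1 T2, of "z - r"]
        quartic_eval_shift[of e r "z - r"]
      by (simp add: S_def e'_def poly_pcompose algebra_simps power2_eq_square)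
    moreover have "S \<noteq> 0" using e'0 by (simp add: S_def pcompose_eq_0_iff)
    moreover have "degree S \<le> 2" by (simp add: S_def degree_pcompose)
    ultimately have "card {z. quartic_eval e z = 0} \<le> 2"
      using card_zeros_le_degree_of_square[of "64 * e' 0^3"] e'0 by fastforce
    with roots show False by simp
  qed
  define \<sigma> where "\<sigma> = T 3 / (2 * T 2)"
  have T3: "T 3 = 2 * \<sigma> * T 2" using T2 by (simp add: \<sigma>_def)
  with discr T2 have T4: "T 4 = \<sigma>^2 * T 2" by (auto simp: power2_eq_square mult.assoc)
  have factorization: "quartic_eval q (r + u) = T 2 * u^2 * (1 + \<sigma> * u)^2" for u
  proof -
    have "quartic_eval q (r + u) = quartic_eval T u" by (simp add: T_def quartic_eval_shift)
    also have "\<dots> = T 2 * u^2 * (1 + \<sigma> * u)^2"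
      unfolding quartic_eval_def T0 T1 T3 T4
      by (simp add: algebra_simps power2_eq_square power3_eq_cube power4_eq_xxxx)
    finally show ?thesis .
  qed
  show ?thesis by (rule that[of \<sigma>]) (use T2 factorization in \<open>simp_all add: T_def\<close>)
qed

lemma hessian_pencil_double_root_at_infinity:
  fixes e q :: "nat \<Rightarrow> 'a::field_char_0"
  assumes pencil: "\<And>i. q i = a * e i + b * quartic_hessian e i" and "b \<noteq> 0"
    and roots: "3 \<le> card {z. quartic_eval e z = 0}" and "e 4 \<noteq> 0"
    and "q 4 = 0" "q 3 = 0"
  shows "q 2 \<noteq> 0" "q 1 ^ 2 = 4 * q 0 * q 2"
proof -
  show "q 1 ^ 2 = 4 * q 0 * q 2"
    by (rule hessian_pencil_double_root_discriminant_at_infinity[OF assms(4) pencil assms(5,6)])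
  show "q 2 \<noteq> 0"
  proof
    assume q2: "q 2 = 0"
    define S where "S = [:4 * e 4 * e 2 - e 3^2, 4 * e 4 * e 3, 8 * e 4^2:]"
    have "64 * e 4^3 * quartic_eval e z = poly S z ^ 2" for z
      using hessian_pencil_triple_root_square_at_infinity[OF assms(4,2) pencil assms(5,6) q2, of z]
      by (simp add: S_def algebra_simps power2_eq_square)
    moreover have "S \<noteq> 0" using assms(4) by (simp add: S_def)
    moreover have "degree S \<le> 2" by (simp add: S_def)
    ultimately have "card {z. quartic_eval e z = 0} \<le> 2"
      using card_zeros_le_degree_of_square[of "64 * e 4^3"] assms(4) by fastforce
    with roots show False by simp
  qed
qed

lemma poly_pderiv_prod_linear:
  fixes A :: "'a::idom set"
  assumes "finite A" "p \<in> A"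
  shows "poly (pderiv (\<Prod>a\<in>A. [:-a, 1:])) p = (\<Prod>a\<in>A - {p}. p - a)"
proof -
  have "poly (pderiv (\<Prod>a\<in>A. [:-a, 1:])) p = (\<Sum>b\<in>A. \<Prod>a\<in>A - {b}. p - a)"
    by (simp add: pderiv_prod poly_sum poly_prod pderiv_pCons)
  also have "\<dots> = (\<Prod>a\<in>A - {p}. p - a) + (\<Sum>b\<in>A - {p}. \<Prod>a\<in>A - {b}. p - a)"
    using assms by (subst sum.remove) auto
  also have "(\<Sum>b\<in>A - {p}. \<Prod>a\<in>A - {b}. p - a) = 0"
    using assms by (intro sum.neutral ballI prod_zero) auto
  finally show ?thesis by simp
qed

section \<open>Zero divisors of binary quartics\<close>

(* Multiplicity at x of the zero of the binary quartic form Y^4 Q(X/Y) on the projective line,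
   with None the point at infinity. *)
definition quartic_zero_mult :: "'a::idom poly \<Rightarrow> 'a option \<Rightarrow> nat" where
  "quartic_zero_mult Q x = (case x of Some z \<Rightarrow> order z Q | None \<Rightarrow> 4 - degree Q)"

lemma order_linear_power: "order z ([:-r, 1:] ^ n) = (if z = r then n else 0)"
  by (auto simp: order_power_n_n intro!: order_0I)

lemma quartic_zero_mult_square:
  fixes Q :: "'a::field poly"
  assumes "c \<noteq> 0" "Q = smult c (([:-r, 1:] * [:1 - \<sigma> * r, \<sigma>:]) ^ 2)"
  defines "Z \<equiv> {x. 0 < quartic_zero_mult Q x}"
  shows "card Z = 2 \<and> (\<forall>x\<in>Z. quartic_zero_mult Q x = 2)"
proof -
  define L where "L = [:1 - \<sigma> * r, \<sigma>:]"
  have "poly L r = 1" by (simp add: L_def)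
  hence L0: "L \<noteq> 0" by auto
  have Q: "Q = smult c ([:-r, 1:] ^ 2 * L ^ 2)" using assms(2) by (simp only: L_def power_mult_distrib)
  have order_Q: "order z Q = order z ([:-r, 1:] ^ 2) + order z (L ^ 2)" for z
    unfolding Q using assms(1) L0 by (simp add: order_smult order_mult)
  have degree_Q: "degree Q = 2 + 2 * degree L"
    unfolding Q using assms(1) L0 by (simp add: degree_mult_eq degree_power_eq degree_linear_power)
  show ?thesis
  proof (cases "\<sigma> = 0")
    case True
    hence "L = 1" by (simp add: L_def)
    hence "quartic_zero_mult Q x = (if x = Some r \<or> x = None then 2 else 0)" for x
      using order_Q degree_Q by (auto simp: quartic_zero_mult_def order_linear_power split: option.split)
    hence "Z = {Some r, None}" "\<forall>x\<in>Z. quartic_zero_mult Q x = 2" by (auto simp: Z_def)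
    thus ?thesis by simp
  next
    case False
    define s where "s = r - 1 / \<sigma>"
    have "L = smult \<sigma> [:-s, 1:]" using False by (simp add: L_def s_def algebra_simps)
    hence "L ^ 2 = smult (\<sigma> ^ 2) ([:-s, 1:] ^ 2)" by (simp only: smult_power)
    hence "order z (L ^ 2) = (if z = s then 2 else 0)" for z
      using False by (simp add: order_smult order_linear_power)
    moreover have "degree L = 1" using False by (simp add: L_def)
    ultimately have "quartic_zero_mult Q x = (if x = Some r \<or> x = Some s then 2 else 0)" for x
      using order_Q degree_Q False
      by (auto simp: quartic_zero_mult_def order_linear_power s_def split: option.split)
    moreover have "r \<noteq> s" using False by (simp add: s_def)
    ultimately have "Z = {Some r, Some s}" "\<forall>x\<in>Z. quartic_zero_mult Q x = 2" "Some r \<noteq> Some s"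
      by (auto simp: Z_def)
    thus ?thesis by simp
  qed
qed

lemma quartic_zero_mult_rsquarefree:
  fixes Q :: "complex poly"
  assumes "rsquarefree Q" "3 \<le> degree Q" "degree Q \<le> 4"
  defines "Z \<equiv> {x. 0 < quartic_zero_mult Q x}"
  shows "card Z = 4 \<and> (\<forall>x\<in>Z. quartic_zero_mult Q x = 1)"
proof -
  define R where "R = {z. poly Q z = 0}"
  have Q0: "Q \<noteq> 0" using assms(1) by (simp add: rsquarefree_def)
  have "degree Q = degree (smult (lead_coeff Q) (\<Prod>z\<in>R. [:-z, 1:]))"
    using complex_poly_decompose_rsquarefree[OF assms(1)] by (simp add: R_def)
  also have "\<dots> = degree (\<Prod>z\<in>R. [:-z, 1:])" using Q0 by simp
  also have "\<dots> = card R" by (simp add: degree_prod_eq_sum_degree)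
  finally have card_R: "card R = degree Q" ..
  have finite_R: "finite R" unfolding R_def by (rule poly_roots_finite[OF Q0])
  have mult: "quartic_zero_mult Q x =
      (case x of Some z \<Rightarrow> if z \<in> R then 1 else 0 | None \<Rightarrow> 4 - degree Q)" for x
    using assms(1) Q0
    by (auto simp: quartic_zero_mult_def R_def rsquarefree_root_order order_0I split: option.split)
  have Z: "Z = Some ` R \<union> (if degree Q = 3 then {None} else {})"
  proof (intro set_eqI)
    show "x \<in> Z \<longleftrightarrow> x \<in> Some ` R \<union> (if degree Q = 3 then {None} else {})" for x
      using assms(2,3) by (cases x) (auto simp: Z_def mult)
  qed
  have "card Z = card R + (if degree Q = 3 then 1 else 0)"
    unfolding Z using finite_R by (simp add: card_image)
  hence "card Z = 4" using card_R assms(2,3) by simp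
  moreover have "\<forall>x\<in>Z. quartic_zero_mult Q x = 1" using assms(2,3) by (auto simp: Z mult)
  ultimately show ?thesis by simp
qed

lemma quartic_zero_mult_cases:
  fixes Q :: "complex poly"
  assumes "Q \<noteq> 0" "degree Q \<le> 4"
    and finite_double: "\<And>r. 2 \<le> order r Q \<Longrightarrow>
      \<exists>c \<sigma>. c \<noteq> 0 \<and> Q = smult c (([:-r, 1:] * [:1 - \<sigma> * r, \<sigma>:]) ^ 2)"
    and infinite_double: "degree Q \<le> 2 \<Longrightarrow> \<exists>r. 2 \<le> order r Q"
  defines "Z \<equiv> {x. 0 < quartic_zero_mult Q x}"
  shows "(card Z = 2 \<and> (\<forall>x\<in>Z. quartic_zero_mult Q x = 2)) \<or>
         (card Z = 4 \<and> (\<forall>x\<in>Z. quartic_zero_mult Q x = 1))"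
proof (cases "\<exists>r. 2 \<le> order r Q")
  case True
  then obtain c \<sigma> r where "c \<noteq> 0" "Q = smult c (([:-r, 1:] * [:1 - \<sigma> * r, \<sigma>:]) ^ 2)"
    using finite_double by blast
  thus ?thesis unfolding Z_def using quartic_zero_mult_square by blast
next
  case False
  hence "rsquarefree Q" using assms(1) unfolding rsquarefree_def by (auto simp: not_le less_2_cases_iff)
  moreover have "3 \<le> degree Q" using False infinite_double by (cases "degree Q \<le> 2") auto
  ultimately show ?thesis unfolding Z_def using quartic_zero_mult_rsquarefree assms(2) by blast
qed

section \<open>Local analysis of quadratic differentials\<close>

lemma analytic_on_poly [analytic_intros]:
  "f analytic_on A \<Longrightarrow> (\<lambda>z. poly p (f z)) analytic_on A"
  unfolding poly_altdef by (intro analytic_intros)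

lemma tendsto_square_mult_of_bigo_inverse:
  fixes \<phi> :: "complex \<Rightarrow> complex"
  assumes "\<phi> \<in> O[at 0](\<lambda>t. 1 / t)"
  shows "((\<lambda>t. t^2 * \<phi> t) \<longlongrightarrow> 0) (at 0)"
proof -
  obtain c where c: "c > 0" "eventually (\<lambda>t. norm (\<phi> t) \<le> c * norm (1 / t)) (at 0)"
    using assms by (elim landau_o.bigE)
  show ?thesis
  proof (rule Lim_null_comparison)
    show "eventually (\<lambda>t. norm (t^2 * \<phi> t) \<le> c * norm t) (at 0)"
      using c(2)
    proof eventually_elim
      case (elim t)
      have "norm (t^2 * \<phi> t) = norm t ^ 2 * norm (\<phi> t)" by (simp add: norm_mult norm_power)
      also have "\<dots> \<le> norm t ^ 2 * (c * norm (1 / t))" using elim by (intro mult_left_mono) auto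
      also have "\<dots> = c * norm t" by (cases "t = 0") (simp_all add: norm_divide power2_eq_square)
      finally show ?case .
    qed
    show "((\<lambda>t. c * norm t) \<longlongrightarrow> 0) (at (0::complex))"
      by (auto intro!: tendsto_eq_intros)
  qed
qed

lemma zorder_eq_of_factorization:
  fixes F R S :: "complex \<Rightarrow> complex"
  assumes eq: "\<forall>\<^sub>F w in at z. F w = (w - z) ^ m * R w / S w"
    and "R analytic_on {z}" "S analytic_on {z}" "R z \<noteq> 0" "S z \<noteq> 0"
  shows "zorder F z = int m"
proof -
  obtain A where A: "open A" "z \<in> A" "R holomorphic_on A" "S holomorphic_on A"
    using assms(2,3) analytic_at_two by blast
  obtain \<epsilon> where \<epsilon>: "\<epsilon> > 0" "\<And>w. dist z w < \<epsilon> \<Longrightarrow> S w \<noteq> 0"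
    using continuous_at_avoid[OF analytic_at_imp_isCont[OF assms(3)] assms(5)] by blast
  have "zorder F z = zorder (\<lambda>w. R w / S w * (w - z) ^ m) z"
    by (rule zorder_cong[OF _ refl]) (use eq in \<open>eventually_elim, simp\<close>)
  also have "\<dots> = int m"
  proof (rule zorder_eqI[of "A \<inter> ball z \<epsilon>" z "\<lambda>w. R w / S w"])
    show "(\<lambda>w. R w / S w) holomorphic_on A \<inter> ball z \<epsilon>"
      using A \<epsilon> by (auto intro!: holomorphic_intros elim: holomorphic_on_subset)
  qed (use A \<epsilon> assms(4,5) in auto)
  finally show ?thesis .
qed

definition double_pole_coeff :: "real \<Rightarrow> complex" where
  "double_pole_coeff a = - complex_of_real (a ^ 2) / (4 * complex_of_real (pi ^ 2))"

lemma double_pole_coeff_nonzero: "a \<noteq> 0 \<Longrightarrow> double_pole_coeff a \<noteq> 0"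
  by (simp add: double_pole_coeff_def)

lemma qd_double_pole_tendsto:
  assumes "qd_double_pole_residue f x a"
  shows "((\<lambda>t. t^2 * qd_local f x t) \<longlongrightarrow> double_pole_coeff a) (at 0)"
proof -
  have "((\<lambda>t. t^2 * (qd_local f x t -
            (- complex_of_real (a ^ 2)) / (4 * complex_of_real (pi ^ 2) * t ^ 2)))
          \<longlongrightarrow> 0) (at 0)"
    using assms unfolding qd_double_pole_residue_def by (intro tendsto_square_mult_of_bigo_inverse) blast
  hence "((\<lambda>t. t^2 * qd_local f x t - double_pole_coeff a) \<longlongrightarrow> 0) (at 0)"
    by (rule Lim_transform_eventually)
       (auto simp: eventually_at_filter double_pole_coeff_def field_simps)
  thus ?thesis by (simp add: LIM_zero_iff)
qed

lemma qd_holomorphic_tendsto: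
  assumes "qd_holomorphic_at f x"
  obtains c where "(qd_local f x \<longlongrightarrow> c) (at 0)"
proof -
  obtain g where g: "g analytic_on {0}" "\<forall>\<^sub>F t in at 0. qd_local f x t = g t"
    using assms by (auto simp: qd_holomorphic_at_def)
  have "(g \<longlongrightarrow> g 0) (at 0)" using analytic_at_imp_isCont[OF g(1)] by (simp add: isCont_def)
  hence "(qd_local f x \<longlongrightarrow> g 0) (at 0)"
    by (rule Lim_transform_eventually) (rule eventually_mono[OF g(2)], simp)
  thus ?thesis by (rule that)
qed

lemma meromorphic_qd_meromorphic_at:
  assumes "meromorphic_qd f"
  shows "f meromorphic_on {z}"
proof -
  have "qd_local f (Some z) meromorphic_on {0}" using assms by (simp add: meromorphic_qd_def)
  thus ?thesis by (simp add: qd_local_def meromorphic_on_def)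
qed

lemma meromorphic_qd_eventually_analytic_at_infinity:
  assumes "meromorphic_qd f"
  shows "\<forall>\<^sub>F w in at_infinity. f analytic_on {w}"
proof -
  define h where "h = qd_local f None"
  have "h meromorphic_on {0}" using assms unfolding meromorphic_qd_def h_def by blast
  then obtain r where r: "r > 0" "h analytic_on ball 0 r - {0}"
    unfolding meromorphic_at_iff isolated_singularity_at_def by blast
  define S where "S = {w::complex. 1 / r < norm w}"
  have "open S" unfolding S_def by (intro open_Collect_less continuous_intros)
  have S0: "w \<noteq> 0" if "w \<in> S" for w using r that by (auto simp: S_def)
  have "(h \<circ> inverse) analytic_on S"
  proof (rule analytic_on_compose_gen[OF _ r(2)])
    show "inverse analytic_on S" using S0 by (auto intro!: analytic_intros)
    show "inverse w \<in> ball 0 r - {0}" if "w \<in> S" for w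
      using that S0[OF that] r(1) by (auto simp: S_def norm_inverse norm_divide field_simps)
  qed
  hence "(\<lambda>w. h (inverse w) * inverse w ^ 4) analytic_on S"
    using S0 by (auto simp: o_def intro!: analytic_intros)
  hence "f holomorphic_on S"
    by (rule holomorphic_transform[OF analytic_imp_holomorphic])
       (use S0 in \<open>auto simp: h_def qd_local_def field_simps\<close>)
  hence "f analytic_on S" using \<open>open S\<close> by (simp add: analytic_on_open)
  thus ?thesis
    unfolding eventually_at_infinity S_def
    by (intro exI[of _ "1 / r + 1"]) (auto elim: analytic_on_subset)
qed

section \<open>Four double poles of residue one\<close>

locale four_double_poles =
  fixes f :: "complex \<Rightarrow> complex" and P :: "complex option set"
  assumes meromorphic: "meromorphic_qd f"
    and card_P: "card P = 4"
    and double_pole: "\<forall>x\<in>P. qd_double_pole_residue f x 1"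
    and holomorphic: "\<forall>x. x \<notin> P \<longrightarrow> qd_holomorphic_at f x"
begin

definition poles :: "complex set" where
  "poles = {z. Some z \<in> P}"

definition pole_poly :: "complex poly" where
  "pole_poly = (\<Prod>p\<in>poles. [:-p, 1:])"

definition cleared :: "complex \<Rightarrow> complex" where
  "cleared w = f w * poly pole_poly w ^ 2"

definition numerator :: "complex \<Rightarrow> complex" where
  "numerator = remove_sings cleared"

(* The Taylor coefficients of the entire function numerator, cut off beyond degree 4 so that
   num_coeff lies in the Hessian pencil at every index. *)
definition num_coeff :: "nat \<Rightarrow> complex" where
  "num_coeff i = (if i \<le> 4 then (deriv ^^ i) numerator 0 / fact i else 0)"

definition num_poly :: "complex poly" where
  "num_poly = [:num_coeff 0, num_coeff 1, num_coeff 2, num_coeff 3, num_coeff 4:]"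

lemma finite_P: "finite P"
  using card_P by (metis card.infinite zero_neq_numeral)

lemma finite_poles: "finite poles"
  using finite_vimageI[OF finite_P, of Some] by (simp add: poles_def vimage_def)

lemma card_poles: "card poles = (if None \<in> P then 3 else 4)"
proof -
  have split_P: "P = Some ` poles \<union> (P \<inter> {None})"
  proof (intro equalityI subsetI)
    show "x \<in> Some ` poles \<union> (P \<inter> {None})" if "x \<in> P" for x
      using that by (cases x) (auto simp: poles_def)
  qed (auto simp: poles_def)
  have "card (Some ` poles \<union> (P \<inter> {None})) = card (Some ` poles) + card (P \<inter> {None})"
    by (rule card_Un_disjoint) (use finite_poles in auto)
  hence "card P = card poles + card (P \<inter> {None})"
    using split_P by (simp add: card_image)
  thus ?thesis using card_P by (cases "None \<in> P") auto
qed

lemma poly_pole_poly_eq_0_iff: "poly pole_poly z = 0 \<longleftrightarrow> z \<in> poles"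
  using finite_poles by (simp add: pole_poly_def poly_prod)

lemma degree_pole_poly: "degree pole_poly = card poles"
  unfolding pole_poly_def by (subst degree_prod_eq_sum_degree) auto

lemma coeff_pole_poly_top: "coeff pole_poly (card poles) = 1"
  using lead_coeff_prod[of "\<lambda>p. [:-p, 1:]" poles] degree_pole_poly unfolding pole_poly_def by simp

lemma poly_pderiv_pole_poly: "p \<in> poles \<Longrightarrow> poly (pderiv pole_poly) p = (\<Prod>q\<in>poles - {p}. p - q)"
  unfolding pole_poly_def by (rule poly_pderiv_prod_linear[OF finite_poles])

lemma poly_pole_poly_inverse:
  assumes "t \<noteq> 0"
  shows "poly pole_poly (1 / t) * t ^ card poles = (\<Prod>p\<in>poles. 1 - p * t)"
proof -
  have "poly pole_poly (1 / t) * t ^ card poles = (\<Prod>p\<in>poles. (1 / t - p) * t)"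
    by (simp add: pole_poly_def poly_prod prod.distrib)
  also have "\<dots> = (\<Prod>p\<in>poles. 1 - p * t)"
    using assms by (intro prod.cong) (auto simp: field_simps)
  finally show ?thesis .
qed

lemma cleared_tendsto_at_pole:
  assumes "p \<in> poles"
  shows "cleared \<midarrow>p\<rightarrow> double_pole_coeff 1 * poly (pderiv pole_poly) p ^ 2"
proof -
  have eq: "cleared (p + t) = (t^2 * qd_local f (Some p) t) * (\<Prod>q\<in>poles - {p}. p + t - q) ^ 2" for t
  proof -
    have "poly pole_poly (p + t) = t * (\<Prod>q\<in>poles - {p}. p + t - q)"
      unfolding pole_poly_def poly_prod using finite_poles assms by (subst prod.remove) auto
    thus ?thesis by (simp add: cleared_def qd_local_def power_mult_distrib)
  qed
  have "Some p \<in> P" using assms by (simp add: poles_def)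
  hence "((\<lambda>t. t^2 * qd_local f (Some p) t) \<longlongrightarrow> double_pole_coeff 1) (at 0)"
    using double_pole qd_double_pole_tendsto by blast
  hence "((\<lambda>t. cleared (p + t)) \<longlongrightarrow> double_pole_coeff 1 * (\<Prod>q\<in>poles - {p}. p + 0 - q) ^ 2) (at 0)"
    unfolding eq by (intro tendsto_mult tendsto_power tendsto_prod tendsto_intros)
  thus ?thesis using poly_pderiv_pole_poly[OF assms] by (simp add: LIM_offset_zero_iff)
qed

lemma cleared_tendsto_regular:
  assumes "z \<notin> poles"
  obtains c where "cleared \<midarrow>z\<rightarrow> c"
proof -
  have "qd_holomorphic_at f (Some z)" using holomorphic assms by (auto simp: poles_def)
  then obtain c where "((\<lambda>t. f (z + t)) \<longlongrightarrow> c) (at 0)"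
    by (auto simp: qd_local_def elim: qd_holomorphic_tendsto)
  hence "f \<midarrow>z\<rightarrow> c" by (simp add: LIM_offset_zero_iff)
  hence "cleared \<midarrow>z\<rightarrow> c * poly pole_poly z ^ 2"
    unfolding cleared_def by (intro tendsto_intros)
  thus ?thesis by (rule that)
qed

lemma isolated_singularity_cleared: "isolated_singularity_at cleared z"
proof -
  have "cleared meromorphic_on {z}" unfolding cleared_def
    by (intro meromorphic_on_mult meromorphic_qd_meromorphic_at[OF meromorphic]
        analytic_on_imp_meromorphic_on) (auto intro!: analytic_intros)
  thus ?thesis by (simp add: meromorphic_at_iff)
qed

lemma numerator_holomorphic: "numerator holomorphic_on UNIV"
proof -
  have "numerator analytic_on {z}" for z
  proof (cases "z \<in> poles")
    case True
    thus ?thesis unfolding numerator_def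
      by (intro remove_sings_analytic_at[OF isolated_singularity_cleared cleared_tendsto_at_pole])
  next
    case False
    then obtain c where "cleared \<midarrow>z\<rightarrow> c" by (rule cleared_tendsto_regular)
    thus ?thesis unfolding numerator_def
      by (intro remove_sings_analytic_at[OF isolated_singularity_cleared])
  qed
  thus ?thesis using analytic_imp_holomorphic analytic_on_analytic_at by blast
qed

lemma numerator_at_pole: "p \<in> poles \<Longrightarrow> numerator p = double_pole_coeff 1 * poly (pderiv pole_poly) p ^ 2"
  unfolding numerator_def by (intro remove_sings_eqI cleared_tendsto_at_pole)

lemma eventually_numerator_eq: "\<forall>\<^sub>F w in at z. numerator w = cleared w"
  unfolding numerator_def by (rule eventually_remove_sings_eq_at[OF isolated_singularity_cleared])

lemma eventually_numerator_eq_at_infinity: "\<forall>\<^sub>F w in at_infinity. numerator w = cleared w"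
  using meromorphic_qd_eventually_analytic_at_infinity[OF meromorphic]
proof eventually_elim
  case (elim w)
  hence "cleared analytic_on {w}" unfolding cleared_def by (auto intro!: analytic_intros)
  thus ?case unfolding numerator_def by (rule remove_sings_at_analytic)
qed

lemma cleared_at_inverse:
  assumes "t \<noteq> 0"
  shows "cleared (1 / t) * t ^ 4 =
           ((if None \<in> P then t^2 else 1) * qd_local f None t) * (\<Prod>p\<in>poles. 1 - p * t) ^ 2"
proof -
  have "(\<Prod>p\<in>poles. 1 - p * t) = poly pole_poly (1 / t) * t ^ card poles"
    using poly_pole_poly_inverse[OF assms] ..
  thus ?thesis using assms card_poles
    by (simp add: cleared_def qd_local_def field_simps power2_eq_square power3_eq_cube power4_eq_xxxx)
qed

lemma cleared_tendsto_at_infinity: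
  obtains L where "((\<lambda>t. cleared (1 / t) * t ^ 4) \<longlongrightarrow> L) (at 0)"
    and "None \<in> P \<Longrightarrow> L = double_pole_coeff 1"
proof -
  obtain L where L: "((\<lambda>t. (if None \<in> P then t^2 else 1) * qd_local f None t) \<longlongrightarrow> L) (at 0)"
    and "None \<in> P \<Longrightarrow> L = double_pole_coeff 1"
  proof (cases "None \<in> P")
    case True
    hence "((\<lambda>t. t^2 * qd_local f None t) \<longlongrightarrow> double_pole_coeff 1) (at 0)"
      using double_pole qd_double_pole_tendsto by blast
    thus ?thesis using that True by simp
  next
    case False
    then obtain c where "(qd_local f None \<longlongrightarrow> c) (at 0)"
      using holomorphic qd_holomorphic_tendsto by blast
    thus ?thesis using that False by simp
  qed
  moreover have "((\<lambda>t. (\<Prod>p\<in>poles. 1 - p * t) ^ 2) \<longlongrightarrow> (\<Prod>p\<in>poles. 1 - p * 0) ^ 2) (at 0)"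
    by (intro tendsto_intros)
  ultimately have "((\<lambda>t. ((if None \<in> P then t^2 else 1) * qd_local f None t) * (\<Prod>p\<in>poles. 1 - p * t) ^ 2)
      \<longlongrightarrow> L) (at 0)"
    using tendsto_mult by fastforce
  hence "((\<lambda>t. cleared (1 / t) * t ^ 4) \<longlongrightarrow> L) (at 0)"
    by (rule Lim_transform_eventually) (auto simp: eventually_at_filter cleared_at_inverse)
  thus ?thesis using that \<open>None \<in> P \<Longrightarrow> L = double_pole_coeff 1\<close> by blast
qed

lemma numerator_eq_quartic: "numerator z = quartic_eval num_coeff z"
proof -
  obtain L where L: "((\<lambda>t. cleared (1 / t) * t ^ 4) \<longlongrightarrow> L) (at 0)"
    by (rule cleared_tendsto_at_infinity)
  hence "((\<lambda>w. cleared w / w ^ 4) \<longlongrightarrow> L) at_infinity"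
    by (simp add: lim_at_infinity_0 o_def divide_inverse power_inverse)
  hence "\<forall>\<^sub>F w in at_infinity. norm (cleared w / w ^ 4) < norm L + 1"
    by (rule order_tendstoD(2)[OF tendsto_norm]) simp
  moreover have "\<forall>\<^sub>F w in at_infinity. (w::complex) \<noteq> 0"
    unfolding eventually_at_infinity by (intro exI[of _ 1]) auto
  ultimately have "\<forall>\<^sub>F w in at_infinity. norm (numerator w) \<le> (norm L + 1) * norm w ^ 4"
    using eventually_numerator_eq_at_infinity
  proof eventually_elim
    case (elim w)
    thus ?case by (simp add: norm_divide norm_power field_simps)
  qed
  then obtain A where "\<And>w. A \<le> norm w \<Longrightarrow> norm (numerator w) \<le> (norm L + 1) * norm w ^ 4"
    unfolding eventually_at_infinity by blast
  hence "numerator z = (\<Sum>i\<le>4. (deriv ^^ i) numerator 0 / fact i * z ^ i)"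
    by (intro Liouville_polynomial[OF numerator_holomorphic])
  thus ?thesis by (simp add: quartic_eval_def num_coeff_def eval_nat_numeral algebra_simps)
qed

lemma num_coeff_top: "None \<in> P \<Longrightarrow> num_coeff 4 = double_pole_coeff 1"
proof -
  assume "None \<in> P"
  then obtain L where L: "((\<lambda>t. cleared (1 / t) * t ^ 4) \<longlongrightarrow> double_pole_coeff 1) (at 0)"
    using cleared_tendsto_at_infinity by metis
  have "\<forall>\<^sub>F t in at 0. numerator (1 / t) = cleared (1 / t)"
    using filterlim_iff[THEN iffD1, OF filterlim_inverse_at_infinity, rule_format,
        OF eventually_numerator_eq_at_infinity] by (simp add: divide_inverse)
  hence "\<forall>\<^sub>F t in at 0. cleared (1 / t) * t ^ 4 = numerator (1 / t) * t ^ 4"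
    by eventually_elim simp
  with L have "((\<lambda>t. numerator (1 / t) * t ^ 4) \<longlongrightarrow> double_pole_coeff 1) (at 0)"
    by (rule Lim_transform_eventually)
  moreover have "((\<lambda>t. numerator (1 / t) * t ^ 4) \<longlongrightarrow> num_coeff 4) (at 0)"
  proof -
    let ?p = "\<lambda>t. num_coeff 4 + num_coeff 3 * t + num_coeff 2 * t^2 + num_coeff 1 * t^3 + num_coeff 0 * t^4"
    have "(?p \<longlongrightarrow> ?p 0) (at 0)" by (intro tendsto_intros)
    hence "(?p \<longlongrightarrow> num_coeff 4) (at 0)" by simp
    moreover have "\<forall>\<^sub>F t in at 0. ?p t = numerator (1 / t) * t ^ 4"
      by (auto simp: eventually_at_filter numerator_eq_quartic quartic_eval_def field_simps
            power2_eq_square power3_eq_cube power4_eq_xxxx)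
    ultimately show ?thesis by (rule Lim_transform_eventually)
  qed
  ultimately show ?thesis using tendsto_unique[OF at_neq_bot] by blast
qed

lemma eventually_f_eq: "\<forall>\<^sub>F w in at z. f w = numerator w / poly pole_poly w ^ 2"
proof -
  have "\<forall>\<^sub>F w in at z. w \<notin> poles"
    using islimpt_iff_eventually islimpt_finite[OF finite_poles] by blast
  with eventually_numerator_eq show ?thesis
  proof eventually_elim
    case (elim w)
    thus ?case by (simp add: cleared_def poly_pole_poly_eq_0_iff)
  qed
qed

lemma eventually_not_pole_at_infinity: "\<forall>\<^sub>F w in at_infinity. w \<notin> poles"
  unfolding eventually_at_infinity
proof (intro exI[of _ "(\<Sum>p\<in>poles. norm p) + 1"] allI impI notI)
  fix w assume "(\<Sum>p\<in>poles. norm p) + 1 \<le> norm w" "w \<in> poles"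
  moreover have "norm w \<le> (\<Sum>p\<in>poles. norm p)"
    using finite_poles \<open>w \<in> poles\<close> by (intro member_le_sum) auto
  ultimately show False by simp
qed

lemma eventually_f_eq_at_infinity: "\<forall>\<^sub>F w in at_infinity. f w = numerator w / poly pole_poly w ^ 2"
  using eventually_not_pole_at_infinity eventually_numerator_eq_at_infinity
  by eventually_elim (simp add: cleared_def poly_pole_poly_eq_0_iff)

lemma coeff_num_poly: "coeff num_poly i = num_coeff i"
  by (auto simp: num_poly_def num_coeff_def coeff_pCons numeral_eq_Suc split: nat.split)

lemma poly_num_poly: "poly num_poly z = numerator z"
  by (simp add: num_poly_def numerator_eq_quartic quartic_eval_def algebra_simps
      power2_eq_square power3_eq_cube power4_eq_xxxx)

lemma degree_num_poly: "degree num_poly \<le> 4"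
  by (simp add: num_poly_def)

lemma poly_pole_poly_quartic: "poly pole_poly z = quartic_eval (coeff pole_poly) z"
  using degree_pole_poly card_poles by (intro poly_eq_quartic_eval) simp

lemma card_pole_poly_roots: "3 \<le> card {z. quartic_eval (coeff pole_poly) z = 0}"
proof -
  have "{z. quartic_eval (coeff pole_poly) z = 0} = poles"
    by (simp add: poly_pole_poly_eq_0_iff flip: poly_pole_poly_quartic)
  thus ?thesis using card_poles by simp
qed

(* Since H(e) = 3 D'^2 at the roots of D, the polynomial c - (k/3) H(e) vanishes at the finite
   poles; the multiple of D subtracted kills its top coefficient (using c 4 = k when infinity is a
   pole), leaving a polynomial of degree below the number of roots. *)
lemma numerator_in_hessian_pencil:
  obtains \<alpha> where "\<And>i. num_coeff i =
    \<alpha> * coeff pole_poly i + double_pole_coeff 1 / 3 * quartic_hessian (coeff pole_poly) i"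
proof -
  define e where "e = coeff pole_poly"
  define \<beta> where "\<beta> = double_pole_coeff 1 / 3"
  have e_top: "(None \<in> P \<longrightarrow> e 4 = 0 \<and> e 3 = 1) \<and> (None \<notin> P \<longrightarrow> e 4 = 1)"
    using coeff_pole_poly_top degree_pole_poly card_poles by (auto simp: e_def coeff_eq_0)
  have at_poles: "quartic_eval num_coeff p = \<beta> * quartic_eval (quartic_hessian e) p" if "p \<in> poles" for p
  proof -
    have "quartic_eval e p = 0" using that by (simp add: e_def poly_pole_poly_eq_0_iff flip: poly_pole_poly_quartic)
    moreover have "quartic_shift e p 1 = poly (pderiv pole_poly) p"
      using degree_pole_poly card_poles by (simp add: e_def poly_pderiv_eq_quartic_shift)
    ultimately show ?thesis using numerator_at_pole[OF that]
      by (simp add: \<beta>_def quartic_eval_hessian numerator_eq_quartic)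
  qed
  define \<alpha> where "\<alpha> = (if None \<in> P then num_coeff 3 - \<beta> * quartic_hessian e 3
                          else num_coeff 4 - \<beta> * quartic_hessian e 4)"
  define x where "x i = num_coeff i - \<alpha> * e i - \<beta> * quartic_hessian e i" for i
  have x_top: "x 4 = 0 \<and> (None \<in> P \<longrightarrow> x 3 = 0)"
    using e_top num_coeff_top by (auto simp: x_def \<alpha>_def \<beta>_def quartic_hessian_def)
  have x_high: "x i = 0" if "4 < i" for i
    using that degree_pole_poly card_poles
    by (simp add: x_def num_coeff_def quartic_hessian_def e_def coeff_eq_0)
  define r where "r = [:x 0, x 1, x 2, x 3:]"
  have "poly r p = 0" if "p \<in> poles" for p
  proof -
    have "poly r p = quartic_eval x p"
      using x_top by (simp add: r_def quartic_eval_def algebra_simps power2_eq_square power3_eq_cube)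
    also have "\<dots> = quartic_eval num_coeff p - \<alpha> * quartic_eval e p - \<beta> * quartic_eval (quartic_hessian e) p"
      by (simp add: quartic_eval_def x_def algebra_simps)
    also have "\<dots> = 0"
      using at_poles[OF that] that by (simp add: e_def poly_pole_poly_eq_0_iff flip: poly_pole_poly_quartic)
    finally show ?thesis .
  qed
  moreover have "degree r < card poles"
    using x_top card_poles by (cases "None \<in> P") (auto simp: r_def)
  ultimately have "r = 0" using poly_eqI_degree[of poles r 0] by simp
  hence "x i = 0" for i using x_top x_high by (cases "i \<le> 4") (auto simp: r_def le_Suc_eq eval_nat_numeral)
  thus ?thesis by (intro that[of \<alpha>]) (simp add: x_def e_def \<beta>_def algebra_simps)
qed

lemma poly_num_poly_quartic: "poly num_poly z = quartic_eval num_coeff z"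
  by (simp add: poly_num_poly numerator_eq_quartic)

lemma poly_num_poly_at_pole: "p \<in> poles \<Longrightarrow> poly num_poly p \<noteq> 0"
  using finite_poles double_pole_coeff_nonzero[of 1]
  by (simp add: poly_num_poly numerator_at_pole poly_pderiv_pole_poly)

lemma num_poly_nonzero: "num_poly \<noteq> 0"
proof -
  have "poles \<noteq> {}" using card_poles by (auto split: if_splits)
  thus ?thesis using poly_num_poly_at_pole by fastforce
qed

lemma degree_num_poly_pole_at_infinity: "None \<in> P \<Longrightarrow> degree num_poly = 4"
proof -
  assume "None \<in> P"
  hence "coeff num_poly 4 \<noteq> 0" using double_pole_coeff_nonzero[of 1] by (simp add: coeff_num_poly num_coeff_top)
  thus ?thesis by (intro antisym degree_num_poly le_degree)
qed

lemma qd_order_regular: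
  assumes "z \<notin> poles"
  shows "qd_order f (Some z) = int (order z num_poly)"
proof -
  define m where "m = order z num_poly"
  obtain R where R: "num_poly = [:-z, 1:] ^ m * R" "\<not> [:-z, 1:] dvd R"
    using order_decomp[OF num_poly_nonzero] unfolding m_def by blast
  have "qd_order f (Some z) = zorder f z"
    unfolding qd_order_def qd_local_def by (subst zorder_shift) (simp add: add.commute)
  also have "\<dots> = int m"
  proof (rule zorder_eq_of_factorization[where R = "poly R" and S = "\<lambda>w. poly pole_poly w ^ 2"])
    show "\<forall>\<^sub>F w in at z. f w = (w - z) ^ m * poly R w / poly pole_poly w ^ 2"
      using eventually_f_eq[of z] by eventually_elim (simp add: R(1) flip: poly_num_poly)
    show "poly R z \<noteq> 0" using R(2) by (simp add: poly_eq_0_iff_dvd)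
    show "poly pole_poly z ^ 2 \<noteq> 0" using assms by (simp add: poly_pole_poly_eq_0_iff)
  qed (auto intro!: analytic_intros)
  finally show ?thesis by (simp add: m_def)
qed

lemma qd_order_infinity:
  assumes "None \<notin> P"
  shows "qd_order f None = int (4 - degree num_poly)"
proof -
  define d where "d = degree num_poly"
  have deg_pole: "degree pole_poly = 4" using assms card_poles degree_pole_poly by simp
  have "\<forall>\<^sub>F w in at_infinity. w \<notin> poles \<and> f w = numerator w / poly pole_poly w ^ 2"
    using eventually_not_pole_at_infinity eventually_f_eq_at_infinity by (rule eventually_conj)
  from filterlim_iff[THEN iffD1, OF filterlim_inverse_at_infinity, rule_format, OF this]
  have "\<forall>\<^sub>F t in at 0. 1 / t \<notin> poles \<and> f (1 / t) = numerator (1 / t) / poly pole_poly (1 / t) ^ 2"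
    by (simp add: divide_inverse)
  hence eq: "\<forall>\<^sub>F t in at 0. qd_local f None t =
      (t - 0) ^ (4 - d) * poly (reflect_poly num_poly) t / poly (reflect_poly pole_poly) t ^ 2"
    unfolding eventually_at_filter
  proof eventually_elim
    case (elim t)
    have "qd_local f None t =
        (t - 0) ^ (4 - d) * poly (reflect_poly num_poly) t / poly (reflect_poly pole_poly) t ^ 2"
      if t: "t \<noteq> 0"
    proof -
      have "(t - 0) ^ (4 - d) * poly (reflect_poly num_poly) t = t ^ 4 * numerator (1 / t)"
        using t degree_num_poly
        by (simp add: poly_reflect_poly_nz d_def poly_num_poly inverse_eq_divide mult.assoc
            flip: power_add)
      thus ?thesis
        using elim t by (simp add: qd_local_def poly_reflect_poly_nz deg_pole inverse_eq_divide
            poly_pole_poly_eq_0_iff field_simps eval_nat_numeral)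
    qed
    thus ?case by simp
  qed
  have "qd_order f None = int (4 - d)"
    unfolding qd_order_def
  proof (rule zorder_eq_of_factorization[OF eq])
    show "poly (reflect_poly num_poly) 0 \<noteq> 0" using num_poly_nonzero by simp
    show "poly (reflect_poly pole_poly) 0 ^ 2 \<noteq> 0"
      using coeff_pole_poly_top degree_pole_poly by simp
  qed (auto intro!: analytic_intros)
  thus ?thesis by (simp add: d_def)
qed

lemma num_poly_double_root:
  assumes "2 \<le> order r num_poly"
  shows "\<exists>c \<sigma>. c \<noteq> 0 \<and> num_poly = smult c (([:-r, 1:] * [:1 - \<sigma> * r, \<sigma>:]) ^ 2)"
proof -
  have root: "poly num_poly r = 0" using assms by (simp add: order_root)
  have "order r (pderiv num_poly) \<noteq> 0" using order_pderiv[OF num_poly_nonzero root] assms by simp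
  hence root': "poly (pderiv num_poly) r = 0" by (simp add: order_root)
  have "r \<notin> poles" using root poly_num_poly_at_pole by blast
  obtain \<alpha> where pencil: "\<And>i. num_coeff i =
      \<alpha> * coeff pole_poly i + double_pole_coeff 1 / 3 * quartic_hessian (coeff pole_poly) i"
    using numerator_in_hessian_pencil by blast
  have "quartic_shift num_coeff r 1 = 0"
    using root' poly_pderiv_eq_quartic_shift[OF degree_num_poly, of r] by (simp add: coeff_num_poly[abs_def])
  then obtain \<sigma> where c: "quartic_shift num_coeff r 2 \<noteq> 0"
    and factor: "\<And>u. quartic_eval num_coeff (r + u) = quartic_shift num_coeff r 2 * u^2 * (1 + \<sigma> * u)^2"
    using hessian_pencil_double_root[OF pencil _ card_pole_poly_roots, of r] double_pole_coeff_nonzero[of 1]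
      \<open>r \<notin> poles\<close> root
    by (auto simp: poly_pole_poly_eq_0_iff poly_num_poly_quartic simp flip: poly_pole_poly_quartic)
  have "poly num_poly z =
      poly (smult (quartic_shift num_coeff r 2) (([:-r, 1:] * [:1 - \<sigma> * r, \<sigma>:]) ^ 2)) z" for z
    using factor[of "z - r"] by (simp add: poly_num_poly_quartic algebra_simps power2_eq_square)
  hence "num_poly = smult (quartic_shift num_coeff r 2) (([:-r, 1:] * [:1 - \<sigma> * r, \<sigma>:]) ^ 2)"
    by (simp add: poly_eq_poly_eq_iff[symmetric] fun_eq_iff)
  thus ?thesis using c by blast
qed

lemma num_poly_double_root_at_infinity:
  assumes "degree num_poly \<le> 2"
  shows "\<exists>r. 2 \<le> order r num_poly"
proof -
  have "None \<notin> P" using assms degree_num_poly_pole_at_infinity by auto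
  hence e4: "coeff pole_poly 4 \<noteq> 0" using coeff_pole_poly_top card_poles by simp
  have c4: "num_coeff 4 = 0" and c3: "num_coeff 3 = 0"
    using assms by (simp_all add: coeff_eq_0 flip: coeff_num_poly)
  obtain \<alpha> where pencil: "\<And>i. num_coeff i =
      \<alpha> * coeff pole_poly i + double_pole_coeff 1 / 3 * quartic_hessian (coeff pole_poly) i"
    using numerator_in_hessian_pencil by blast
  have c2: "num_coeff 2 \<noteq> 0" and discr: "num_coeff 1 ^ 2 = 4 * num_coeff 0 * num_coeff 2"
    using hessian_pencil_double_root_at_infinity[OF pencil _ card_pole_poly_roots e4 c4 c3]
      double_pole_coeff_nonzero[of 1] by auto
  define r where "r = - num_coeff 1 / (2 * num_coeff 2)"
  have c0: "num_coeff 0 = num_coeff 1 ^ 2 / (4 * num_coeff 2)" using discr c2 by (simp add: field_simps)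
  have "poly num_poly z = poly (smult (num_coeff 2) ([:-r, 1:] ^ 2)) z" for z
    using c2 by (simp add: num_poly_def r_def c0 c3 c4 field_simps power2_eq_square)
  hence "num_poly = smult (num_coeff 2) ([:-r, 1:] ^ 2)"
    by (simp add: poly_eq_poly_eq_iff[symmetric] fun_eq_iff)
  hence "order r num_poly = 2" using c2 by (simp add: order_smult order_power_n_n)
  thus ?thesis by (intro exI[of _ r]) simp
qed

lemma zero_mult_at_pole: "x \<in> P \<Longrightarrow> quartic_zero_mult num_poly x = 0"
  using poly_num_poly_at_pole degree_num_poly_pole_at_infinity
  by (auto simp: quartic_zero_mult_def poles_def order_0I split: option.split)

lemma qd_order_eq_zero_mult: "x \<notin> P \<Longrightarrow> qd_order f x = int (quartic_zero_mult num_poly x)"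
  using qd_order_regular qd_order_infinity
  by (auto simp: quartic_zero_mult_def poles_def split: option.split)

lemma qd_zeros_eq: "qd_zeros f = {x. 0 < quartic_zero_mult num_poly x}"
proof (intro set_eqI)
  show "x \<in> qd_zeros f \<longleftrightarrow> x \<in> {x. 0 < quartic_zero_mult num_poly x}" for x
  proof (cases "x \<in> P")
    case True
    hence "qd_order f x = -2" using double_pole by (auto simp: qd_double_pole_residue_def)
    thus ?thesis using zero_mult_at_pole[OF True] by (simp add: qd_zeros_def)
  next
    case False
    thus ?thesis using qd_order_eq_zero_mult[OF False] by (simp add: qd_zeros_def)
  qed
qed

end

theorem lemma3p1:
  fixes f :: "complex \<Rightarrow> complex" and P :: "complex option set"
  assumes "meromorphic_qd f"
    and "card P = 4"
    and "\<forall>x\<in>P. qd_double_pole_residue f x 1"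
    and "\<forall>x. x \<notin> P \<longrightarrow> qd_holomorphic_at f x"
  shows "(card (qd_zeros f) = 2 \<and> (\<forall>x\<in>qd_zeros f. qd_order f x = 2)) \<or>
         (card (qd_zeros f) = 4 \<and> (\<forall>x\<in>qd_zeros f. qd_order f x = 1))"
proof -
  interpret four_double_poles f P using assms by unfold_locales
  let ?m = "quartic_zero_mult num_poly"
  have order: "qd_order f x = int (?m x)" if "x \<in> qd_zeros f" for x
    using that zero_mult_at_pole qd_order_eq_zero_mult by (cases "x \<in> P") (auto simp: qd_zeros_eq)
  have "(card (qd_zeros f) = 2 \<and> (\<forall>x\<in>qd_zeros f. ?m x = 2)) \<or>
        (card (qd_zeros f) = 4 \<and> (\<forall>x\<in>qd_zeros f. ?m x = 1))"
    unfolding qd_zeros_eq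
    by (rule quartic_zero_mult_cases[OF num_poly_nonzero degree_num_poly
          num_poly_double_root num_poly_double_root_at_infinity])
  thus ?thesis using order by (elim disjE conjE) simp_all
qed

end
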